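(* If $G$ is a melonic graph, then $d(G)=0$.
   Context: Trees. A 2-rooted ternary tree of order $n$ is a finite plane tree $U$ with a root vertex of degree 2 and $n$ true vertices of degree 4; each edge is internal or a leaf (half-edge). Each true vertex $v$ has parent edge $e_1(v)$ (towards the root) and ordered children edges $e_2(v),e_3(v),e_4(v)$. One root edge has type $\alpha$, the other $\bar\alpha$; if $e_1(v)$ has type $\tau$ then $e_2(v)$ has the other type and $e_3(v),e_4(v)$ have type $\tau$. Leaves of type $\alpha$ are leaves, of type $\bar\alpha$ anti-leaves. A heap-ordering labels true vertices bijectively by $\{1,\dots,n\}$, increasing from parent to child. Graphs. For even $n$, a graph of order $n$ is $G=(U,w,w')$: $U$ heap-ordered; $w$ a bijection leaves $\to$ anti-leaves (dashed edges; internal edges are solid); $w'$ a partition of true vertices into $n/2$ pairs (wavy edges) with, for each pair $\{v,v'\}$ ($v$ of smaller label), one of eight propagators in $(S,j,k)=(S_v,j_v,k_v)$, $(S',j',k')=(S_{v'},j_{v'},k_{v'})$: $\delta_{jj'}\delta_{kk'}$, $\delta_{j,S-j'}\delta_{kk'}$, $\delta_{jj'}\delta_{k,S-k'}$, $\delta_{j,S-j'}\delta_{k,S-k'}$, $\delta_{jk'}\delta_{kj'}$, $\delta_{j,S-k'}\delta_{kj'}$, $\delta_{jk'}\delta_{k,S-j'}$, $\delta_{j,S-k'}\delta_{k,S-j'}$, with $S=S'$; momenta $j_v,S_v-j_v,k_v,S_v-k_v$ sit on the ends at $v$ of $e_1(v),\dots,e_4(v)$. Faces and degree. Edge-ends at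 true vertices and at the root are slots. Each propagator of $\{v,v'\}$, with $S=S'$, identifies each of $j,S-j,k,S-k$ of $v$ with a momentum of $v'$, thus pairs each slot of $v$ with a slot of $v'$ (the four corners of the wavy edge). Let $\Gamma$ be the graph on slots with edges the solid and dashed edges, the corners, and an extra edge joining the two root slots; its components (cycles) are faces, $F(G)$ their number. $E$ is the $(n/2)\times F(G)$ matrix, rows wavy edges $\omega=\{v,v'\}$ ($v$ smaller label), columns faces, $E_{\omega f}$ = #(corners of $\omega$ in $f$ containing $e_1(v)$ or $e_2(v)$) − #(corners of $\omega$ in $f$ containing $e_3(v)$ or $e_4(v)$). $R(G)=\operatorname{rank}E$ ($0$ if $n=0$), $d(G):=n-F(G)+R(G)+1$. Melonic graphs. For two true vertices joined by three edges, the leading propagator is the one whose slot pairing maps the $v$-end of each joining edge to its $v'$-end. The trivial graph ($n=0$) is the root with a leaf and an anti-leaf joined by a dashed edge. A graph is melonic if (ignoring heap-orderings) it arises from the trivial graph by repeatedly inserting two new true vertices $v,v'$, joined to each other by three edges and by a wavy edge carrying the leading propagator, in one of these ways: (I) into a dashed edge $\{x,y\}$: $e_1(v)$ at $x$, $e_1(v')$ at $y$, dashed edges $e_2(v)$–$e_2(v')$ and $\{e_3(v),e_4(v)\}$ bijectively to $\{e_3(v'),e_4(v')\}$; (II) into a dashed edge $\{z,z'\}$: $e_1(v)$ at $z$, $e_1(v')=e_2(v)$, dashed edges $e_2(v')$–$z'$ and $\{e_3(v),e_4(v)\}$ bijectively to $\{e_3(v'),e_4(v')\}$; (III) into a dashed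 edge $\{z,z'\}$: $e_1(v)$ at $z$, $e_1(v')=e_a(v)$ ($a\in\{3,4\}$, $b$ the other), dashed edges $e_2(v)$–(one of $e_3(v'),e_4(v')$), $e_b(v)$–$e_2(v')$, remaining child leaf of $v'$–$z'$; (IIs) into a solid edge from $u$ to child $z$: $v$ below $u$, $e_1(v')=e_2(v)$, $e_1(z)=e_2(v')$, dashed edges $\{e_3(v),e_4(v)\}$ bijectively to $\{e_3(v'),e_4(v')\}$; (IIIs) as (IIs) but $e_1(v')=e_a(v)$, $a\in\{3,4\}$, $e_1(z)=e_c(v')$, $c\in\{3,4\}$, dashed edges $e_2(v)$–(other of $e_3(v'),e_4(v')$) and $e_b(v)$–$e_2(v')$. *)

theory Defs
  imports Main "Jordan_Normal_Form.DL_Rank"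
begin

text \<open>A slot (edge-end) is a pair (x, i).  The root is vertex 0 with slots (0,1)
(end of the root edge of type alpha) and (0,2) (end of the root edge of type alpha-bar).
A true vertex v (v >= 1) has slots (v,1),...,(v,4): (v,i) is the end at v of e_i(v).
Types: True = alpha, False = alpha-bar.\<close>

type_synonym slot = "nat \<times> nat"

record mgraph =
  par :: "nat \<Rightarrow> slot option"   \<comment> \<open>par v = slot of the parent at which e_1(v) is attached; dom = true vertices\<close>
  dsh :: "slot \<Rightarrow> slot option"   \<comment> \<open>dashed edges, stored symmetrically; dom = leaf and anti-leaf slots\<close>
  cor :: "slot \<Rightarrow> slot option"   \<comment> \<open>corners of the wavy edges, stored symmetrically; dom = slots of true vertices\<close>

definition verts :: "mgraph \<Rightarrow> nat set" where
  "verts G = dom (par G)"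

definition true_slots :: "nat set \<Rightarrow> slot set" where
  "true_slots V = {(v, i) | v i. v \<in> V \<and> i \<in> {1..4}}"

definition all_slots :: "nat set \<Rightarrow> slot set" where
  "all_slots V = {(0,1), (0,2)} \<union> true_slots V"

definition child_slots :: "nat set \<Rightarrow> slot set" where
  "child_slots V = {(0,1), (0,2)} \<union> {(v, i) | v i. v \<in> V \<and> i \<in> {2,3,4}}"

text \<open>Type of a slot given the types tp of the true vertices (type of e_1(v)).\<close>
fun sty :: "(nat \<Rightarrow> bool) \<Rightarrow> slot \<Rightarrow> bool" where
  "sty tp (x, i) = (if x = 0 then i = 1 else if i = 2 then \<not> tp x else tp x)"

text \<open>The eight propagators, as the slot pairing they induce: slot i of v
(momenta j, S-j, k, S-k for i = 1,2,3,4) is paired with slot (prop_perm p i) of v'.\<close>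
definition prop_perm :: "nat \<Rightarrow> nat \<Rightarrow> nat" where
  "prop_perm p i = [[1,2,3,4::nat], [2,1,3,4], [1,2,4,3], [2,1,4,3],
                    [3,4,1,2], [4,3,1,2], [3,4,2,1], [4,3,2,1]] ! p ! (i - 1)"

definition mate :: "mgraph \<Rightarrow> nat \<Rightarrow> nat" where
  "mate G v = fst (the (cor G (v, 1)))"

text \<open>G is a graph of order n (heap-ordered by its vertex names 1..n).\<close>
definition is_graph :: "nat \<Rightarrow> mgraph \<Rightarrow> bool" where
  "is_graph n G \<longleftrightarrow> even n \<and> verts G = {1..n} \<and>
     (\<forall>v\<in>{1..n}. \<exists>s. par G v = Some s \<and> s \<in> child_slots {1..n} \<and> fst s < v) \<and>
     inj_on (par G) {1..n} \<and>
     (\<exists>tp. (\<forall>v\<in>{1..n}. tp v = sty tp (the (par G v))) \<and>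
        dom (dsh G) = child_slots {1..n} - ran (par G) \<and>
        (\<forall>s t. dsh G s = Some t \<longrightarrow> dsh G t = Some s \<and> sty tp s \<noteq> sty tp t)) \<and>
     dom (cor G) = true_slots {1..n} \<and>
     (\<forall>s t. cor G s = Some t \<longrightarrow> cor G t = Some s) \<and>
     (\<forall>v\<in>{1..n}. \<exists>v'\<in>{1..n}. v' \<noteq> v \<and> (\<forall>i\<in>{1..4}. fst (the (cor G (v, i))) = v') \<and>
        (v < v' \<longrightarrow> (\<exists>p<8. \<forall>i\<in>{1..4}. cor G (v, i) = Some (v', prop_perm p i))))"

definition gedges :: "mgraph \<Rightarrow> (slot \<times> slot) set" where
  "gedges G = {((v,1), s) | v s. par G v = Some s}
            \<union> {(s, t). dsh G s = Some t} \<union> {(s, t). cor G s = Some t}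
            \<union> {((0,1), (0,2))}"

definition gadj :: "mgraph \<Rightarrow> (slot \<times> slot) set" where
  "gadj G = gedges G \<union> (gedges G)\<inverse>"

definition faces :: "mgraph \<Rightarrow> slot set set" where
  "faces G = all_slots (verts G) // ((gadj G)\<^sup>*)"

definition nfaces :: "mgraph \<Rightarrow> nat" where
  "nfaces G = card (faces G)"

definition wavy :: "mgraph \<Rightarrow> nat set" where
  "wavy G = {v \<in> verts G. v < mate G v}"

definition Emat :: "mgraph \<Rightarrow> real mat" where
  "Emat G = (let rs = sorted_list_of_set (wavy G);
                 fs = (SOME fs. distinct fs \<and> set fs = faces G)
             in mat (length rs) (length fs)
                  (\<lambda>(r, c). real (card {i\<in>{1,2::nat}. (rs ! r, i) \<in> fs ! c})
                          - real (card {i\<in>{3,4::nat}. (rs ! r, i) \<in> fs ! c})))"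

definition rankE :: "mgraph \<Rightarrow> nat" where
  "rankE G = (if verts G = {} then 0 else vec_space.rank (dim_row (Emat G)) (Emat G))"

definition degree :: "mgraph \<Rightarrow> int" where
  "degree G = int (card (verts G)) - int (nfaces G) + int (rankE G) + 1"

definition trivial_graph :: mgraph where
  "trivial_graph = \<lparr>par = Map.empty, dsh = [(0,1) \<mapsto> (0,2), (0,2) \<mapsto> (0,1)], cor = Map.empty\<rparr>"

definition set_prop :: "(slot \<Rightarrow> slot option) \<Rightarrow> nat \<Rightarrow> nat \<Rightarrow> nat \<Rightarrow> slot \<Rightarrow> slot option" where
  "set_prop c v v' p s =
     (if fst s = v \<and> snd s \<in> {1..4} then Some (v', prop_perm p (snd s))
      else if fst s = v' \<and> snd s \<in> {1..4}
        then Some (v, THE i. i \<in> {1..4} \<and> prop_perm p i = snd s)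
      else c s)"

definition add_dash :: "(slot \<Rightarrow> slot option) \<Rightarrow> slot \<Rightarrow> slot \<Rightarrow> slot \<Rightarrow> slot option" where
  "add_dash d s t = d(s \<mapsto> t, t \<mapsto> s)"

definition del_dash :: "(slot \<Rightarrow> slot option) \<Rightarrow> slot \<Rightarrow> slot \<Rightarrow> slot \<Rightarrow> slot option" where
  "del_dash d s t = d(s := None, t := None)"

inductive melonic :: "mgraph \<Rightarrow> bool" where
  triv: "melonic trivial_graph"
| insI: "\<lbrakk>melonic G; dsh G x = Some y; v \<notin> verts G; v' \<notin> verts G; v \<noteq> v'; v \<noteq> 0; v' \<noteq> 0;
          b \<in> {3,4}; p < 8;
          prop_perm p 2 = 2; prop_perm p 3 = b; prop_perm p 4 = 7 - b\<rbrakk> \<Longrightarrow>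
     melonic \<lparr>par = (par G)(v \<mapsto> x, v' \<mapsto> y),
              dsh = add_dash (add_dash (add_dash (del_dash (dsh G) x y)
                       (v,2) (v',2)) (v,3) (v',b)) (v,4) (v',7-b),
              cor = set_prop (cor G) v v' p\<rparr>"
| insII: "\<lbrakk>melonic G; dsh G z = Some z'; v \<notin> verts G; v' \<notin> verts G; v \<noteq> v'; v \<noteq> 0; v' \<noteq> 0;
          b \<in> {3,4}; p < 8;
          prop_perm p 2 = 1; prop_perm p 3 = b; prop_perm p 4 = 7 - b\<rbrakk> \<Longrightarrow>
     melonic \<lparr>par = (par G)(v \<mapsto> z, v' \<mapsto> (v,2)),
              dsh = add_dash (add_dash (add_dash (del_dash (dsh G) z z')
                       (v',2) z') (v,3) (v',b)) (v,4) (v',7-b),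
              cor = set_prop (cor G) v v' p\<rparr>"
| insIII: "\<lbrakk>melonic G; dsh G z = Some z'; v \<notin> verts G; v' \<notin> verts G; v \<noteq> v'; v \<noteq> 0; v' \<noteq> 0;
          a \<in> {3,4}; c \<in> {3,4}; p < 8;
          prop_perm p a = 1; prop_perm p 2 = c; prop_perm p (7 - a) = 2\<rbrakk> \<Longrightarrow>
     melonic \<lparr>par = (par G)(v \<mapsto> z, v' \<mapsto> (v,a)),
              dsh = add_dash (add_dash (add_dash (del_dash (dsh G) z z')
                       (v,2) (v',c)) (v,7-a) (v',2)) (v',7-c) z',
              cor = set_prop (cor G) v v' p\<rparr>"
| insIIs: "\<lbrakk>melonic G; par G z = Some s; v \<notin> verts G; v' \<notin> verts G; v \<noteq> v'; v \<noteq> 0; v' \<noteq> 0;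
          b \<in> {3,4}; p < 8;
          prop_perm p 2 = 1; prop_perm p 3 = b; prop_perm p 4 = 7 - b\<rbrakk> \<Longrightarrow>
     melonic \<lparr>par = (par G)(v \<mapsto> s, v' \<mapsto> (v,2), z \<mapsto> (v',2)),
              dsh = add_dash (add_dash (dsh G) (v,3) (v',b)) (v,4) (v',7-b),
              cor = set_prop (cor G) v v' p\<rparr>"
| insIIIs: "\<lbrakk>melonic G; par G z = Some s; v \<notin> verts G; v' \<notin> verts G; v \<noteq> v'; v \<noteq> 0; v' \<noteq> 0;
          a \<in> {3,4}; c \<in> {3,4}; p < 8;
          prop_perm p a = 1; prop_perm p 2 = 7 - c; prop_perm p (7 - a) = 2\<rbrakk> \<Longrightarrow>
     melonic \<lparr>par = (par G)(v \<mapsto> s, v' \<mapsto> (v,a), z \<mapsto> (v',c)),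
              dsh = add_dash (add_dash (dsh G) (v,2) (v',7-c)) (v,7-a) (v',2),
              cor = set_prop (cor G) v v' p\<rparr>"

end

theory Submission
  imports Defs
begin

text \<open>
  Every melonic insertion adds two true vertices, one wavy edge and exactly three faces.
  The new vertex pair is joined by the leading propagator, so the corner at \<open>(v, 1)\<close> subdivides
  the edge of \<open>\<Gamma>\<close> into which the pair is inserted (this enlarges the face through that edge by
  two slots), while each of the three joining edges coincides with a corner and closes into a
  face with two slots.  Starting from the trivial graph with one face, a melonic graph with
  \<open>k\<close> wavy edges therefore has \<open>2k\<close> true vertices and \<open>3k + 1\<close> faces.  For the rank of \<open>E\<close>,
  the new two-slot face \<open>{(v, 2), (v', \<pi> 2)}\<close> has entry \<open>\<plusminus>1\<close> in the row of the new wavy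
  edge and \<open>0\<close> in all old rows, while the old columns are unchanged on the old rows; so \<open>E\<close>
  stays block triangular of full row rank \<open>k\<close>.  Hence \<open>d(G) = 2k - (3k + 1) + k + 1 = 0\<close>.
\<close>

section \<open>Equivalence classes under subdivision of an edge\<close>

lemma rtrancl_Image_eq_if_sym:
  assumes "sym r" "(p, q) \<in> r\<^sup>*"
  shows "r\<^sup>* `` {p} = r\<^sup>* `` {q}"
proof -
  have "(q, p) \<in> r\<^sup>*" using assms by (meson symD sym_rtrancl)
  then show ?thesis using assms(2) by (auto intro: rtrancl_trans)
qed

lemma rtrancl_Image_subset:
  assumes "R \<subseteq> A \<times> A" "a \<in> A"
  shows "R\<^sup>* `` {a} \<subseteq> A"
proof
  fix b assume "b \<in> R\<^sup>* `` {a}"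
  then have "(a, b) \<in> R\<^sup>*" by simp
  then show "b \<in> A" by (induction rule: rtrancl_induct) (use assms in auto)
qed

lemma quotient_rtrancl_subset:
  assumes "R \<subseteq> A \<times> A" "C \<in> A // R\<^sup>*"
  shows "C \<subseteq> A"
proof -
  from assms(2) obtain a where "a \<in> A" "C = R\<^sup>* `` {a}" by (rule quotientE)
  then show ?thesis using rtrancl_Image_subset[OF assms(1)] by simp
qed

lemma quotient_eq_image: "A // r = (\<lambda>s. r `` {s}) ` A"
  unfolding quotient_def by (rule UNION_singleton_eq_range)

text \<open>
  \<open>R'\<close> replaces the edge \<open>x\<close>--\<open>y\<close> of \<open>R\<close> by the path \<open>x\<close>--\<open>a\<close>--\<open>b\<close>--\<open>y\<close> and adds the edges \<open>K\<close>
  on further new points.  It is only sandwiched between the two, because \<open>x\<close>--\<open>y\<close> may survive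
  in \<open>R'\<close> for another reason.
\<close>
locale edge_subdivision =
  fixes S :: "'a set" and R R' K :: "('a \<times> 'a) set" and x y a b :: 'a
  assumes R: "R \<subseteq> S \<times> S" "sym R" "(x, y) \<in> R"
    and new: "a \<notin> S" "b \<notin> S" "Field K \<inter> (S \<union> {a, b}) = {}"
    and K_closed: "\<And>c d. (c, d) \<in> K \<Longrightarrow> (K \<union> K\<inverse>) `` {c, d} \<subseteq> {c, d}"
    and R'_sym: "sym R'"
    and R'_lower: "R - {(x, y), (y, x)} \<union> ({(x, a), (a, b), (b, y)} \<union> K) \<subseteq> R'"
    and R'_upper: "R' \<subseteq> R \<union> ({(x, a), (a, b), (b, y)} \<union> K) \<union> ({(x, a), (a, b), (b, y)} \<union> K)\<inverse>"
begin

abbreviation "attach \<equiv> \<lambda>C. if x \<in> C then C \<union> {a, b} else C"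

lemma x_y: "x \<in> S" "y \<in> S" "(y, x) \<in> R"
  using R by (auto dest: symD)

lemma R_subset_rtrancl_R': "R \<subseteq> R'\<^sup>*"
proof
  fix e assume "e \<in> R"
  show "e \<in> R'\<^sup>*"
  proof (cases "e \<in> {(x, y), (y, x)}")
    case True
    have "(x, a) \<in> R'" "(a, b) \<in> R'" "(b, y) \<in> R'" using R'_lower by auto
    then have "(x, y) \<in> R'\<^sup>*" by (meson converse_rtrancl_into_rtrancl r_into_rtrancl)
    then show ?thesis using True R'_sym by (auto intro: symD[OF sym_rtrancl])
  qed (use \<open>e \<in> R\<close> R'_lower in auto)
qed

lemma attach_class_closed:
  assumes "s \<in> S"
  shows "R' `` attach (R\<^sup>* `` {s}) \<subseteq> attach (R\<^sup>* `` {s})"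
proof
  let ?C = "R\<^sup>* `` {s}"
  have C_S: "?C \<subseteq> S" using rtrancl_Image_subset[OF R(1) assms] .
  have C_R: "u \<in> ?C" if "t \<in> ?C" "(t, u) \<in> R" for t u
    using that by (auto intro: rtrancl_into_rtrancl)
  fix u assume "u \<in> R' `` attach ?C"
  then obtain t where t: "t \<in> attach ?C" "(t, u) \<in> R \<union> ({(x, a), (a, b), (b, y)} \<union> K)
      \<union> ({(x, a), (a, b), (b, y)} \<union> K)\<inverse>"
    using R'_upper by blast
  have "t \<notin> Field K" using t(1) C_S new(3) by (auto split: if_splits)
  then have not_K: "(t, u) \<notin> K \<union> K\<inverse>" by (auto intro: FieldI1 FieldI2)
  show "u \<in> attach ?C"
  proof (cases "x \<in> ?C")
    case True
    then have "y \<in> ?C" using C_R R(3) by blast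
    then show ?thesis using True t not_K C_R R(1) new by auto
  next
    case False
    then have "y \<notin> ?C" using C_R x_y by blast
    then show ?thesis using False t not_K C_R C_S new by auto
  qed
qed

lemma class_old:
  assumes "s \<in> S"
  shows "R'\<^sup>* `` {s} = attach (R\<^sup>* `` {s})"
proof
  have "R\<^sup>* \<subseteq> R'\<^sup>*" using R_subset_rtrancl_R' by (metis rtrancl_subset_rtrancl)
  moreover have "{a, b} \<subseteq> R'\<^sup>* `` {s}" if "x \<in> R\<^sup>* `` {s}"
  proof -
    have "(x, a) \<in> R'" "(a, b) \<in> R'" using R'_lower by auto
    then show ?thesis using that \<open>R\<^sup>* \<subseteq> R'\<^sup>*\<close> by (auto intro: rtrancl_into_rtrancl)
  qed
  ultimately show "attach (R\<^sup>* `` {s}) \<subseteq> R'\<^sup>* `` {s}" by auto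
next
  have "R'\<^sup>* `` attach (R\<^sup>* `` {s}) = attach (R\<^sup>* `` {s})"
    using attach_class_closed[OF assms] by (rule Image_closed_trancl)
  moreover have "R'\<^sup>* `` {s} \<subseteq> R'\<^sup>* `` attach (R\<^sup>* `` {s})" by (intro Image_mono) auto
  ultimately show "R'\<^sup>* `` {s} \<subseteq> attach (R\<^sup>* `` {s})" by simp
qed

lemma class_path: "R'\<^sup>* `` {a} = attach (R\<^sup>* `` {x})" "R'\<^sup>* `` {b} = attach (R\<^sup>* `` {x})"
proof -
  have "(x, a) \<in> R'" "(a, b) \<in> R'" using R'_lower by auto
  then have "(x, a) \<in> R'\<^sup>*" "(x, b) \<in> R'\<^sup>*" by auto
  then show "R'\<^sup>* `` {a} = attach (R\<^sup>* `` {x})" "R'\<^sup>* `` {b} = attach (R\<^sup>* `` {x})"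
    using class_old[OF x_y(1)] rtrancl_Image_eq_if_sym[OF R'_sym] by metis+
qed

lemma class_pair:
  assumes cd: "(c, d) \<in> K"
  shows "R'\<^sup>* `` {c} = {c, d}" "R'\<^sup>* `` {d} = {c, d}"
proof -
  have "c \<in> Field K" "d \<in> Field K" using cd by (auto intro: FieldI1 FieldI2)
  then have "c \<notin> S \<union> {a, b}" "d \<notin> S \<union> {a, b}" using new(3) by auto
  then have "R' `` {c, d} \<subseteq> (K \<union> K\<inverse>) `` {c, d}"
    using R'_upper R(1) x_y by auto
  also have "\<dots> \<subseteq> {c, d}" using K_closed[OF cd] .
  finally have closed: "R'\<^sup>* `` {c, d} = {c, d}" by (rule Image_closed_trancl)
  have "(c, d) \<in> R'\<^sup>*" "(d, c) \<in> R'\<^sup>*"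
    using cd R'_lower R'_sym by (auto dest: symD)
  then show "R'\<^sup>* `` {c} = {c, d}" "R'\<^sup>* `` {d} = {c, d}"
    using closed by blast+
qed

lemma classes_Field_K: "(\<lambda>s. R'\<^sup>* `` {s}) ` Field K = (\<lambda>(c, d). {c, d}) ` K"
proof (intro equalityI subsetI)
  fix C assume "C \<in> (\<lambda>s. R'\<^sup>* `` {s}) ` Field K"
  then obtain c where c: "c \<in> Field K" "C = R'\<^sup>* `` {c}" by blast
  then consider d where "(c, d) \<in> K" | d where "(d, c) \<in> K" unfolding Field_def by blast
  then show "C \<in> (\<lambda>(c, d). {c, d}) ` K"
    by cases (use class_pair c(2) in force)+
next
  fix C assume "C \<in> (\<lambda>(c, d). {c, d}) ` K"
  then obtain c d where "(c, d) \<in> K" "C = {c, d}" by auto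
  then have "C = R'\<^sup>* `` {c}" "c \<in> Field K" using class_pair by (auto intro: FieldI1)
  then show "C \<in> (\<lambda>s. R'\<^sup>* `` {s}) ` Field K" by blast
qed

lemma quotient_subdivided:
  "(S \<union> {a, b} \<union> Field K) // R'\<^sup>* = attach ` (S // R\<^sup>*) \<union> (\<lambda>(c, d). {c, d}) ` K"
proof -
  have "(\<lambda>s. R'\<^sup>* `` {s}) ` S = attach ` (S // R\<^sup>*)"
    unfolding quotient_eq_image image_image using class_old by (rule image_cong[OF refl])
  moreover have "(\<lambda>s. R'\<^sup>* `` {s}) ` {a, b} \<subseteq> attach ` (S // R\<^sup>*)"
    using class_path x_y(1) unfolding quotient_eq_image by auto
  ultimately show ?thesis using classes_Field_K unfolding quotient_eq_image image_Un by auto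
qed

end

section \<open>Matrices of full row rank\<close>

definition full_row_rank :: "('c \<Rightarrow> 'r \<Rightarrow> real) \<Rightarrow> 'c set \<Rightarrow> 'r set \<Rightarrow> bool" where
  "full_row_rank e C R \<longleftrightarrow>
     (\<forall>r\<in>R. \<exists>x. \<forall>r'\<in>R. (\<Sum>c\<in>C. x c * e c r') = (if r' = r then 1 else 0))"

lemma sum_image_insert_neutral:
  assumes "finite C'" "inj_on h C" "h ` C \<subseteq> C'" "g \<in> C' - h ` C"
    and "\<And>c. c \<in> C' \<Longrightarrow> c \<notin> insert g (h ` C) \<Longrightarrow> f c = 0"
  shows "sum f C' = sum (f \<circ> h) C + f g"
proof -
  have "finite (h ` C)" using assms(1,3) by (rule finite_subset[rotated])
  have "sum f C' = sum f (insert g (h ` C))" using assms by (intro sum.mono_neutral_right) auto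
  also have "\<dots> = f g + sum f (h ` C)" using \<open>finite (h ` C)\<close> assms(4) by simp
  also have "sum f (h ` C) = sum (f \<circ> h) C" using assms(2) by (rule sum.reindex)
  finally show ?thesis by (simp add: add.commute)
qed

lemma full_row_rank_extend:
  assumes rank: "full_row_rank e C R" and fin: "finite C'"
    and h: "inj_on h C" "h ` C \<subseteq> C'" "\<And>c r. c \<in> C \<Longrightarrow> r \<in> R \<Longrightarrow> e (h c) r = e c r"
    and g: "g \<in> C' - h ` C" "\<And>r. r \<in> R \<Longrightarrow> e g r = 0" "e g r\<^sub>0 \<noteq> 0"
    and r\<^sub>0: "r\<^sub>0 \<notin> R"
  shows "full_row_rank e C' (insert r\<^sub>0 R)"
proof -
  have split: "(\<Sum>c\<in>C'. x c * e c r) = (\<Sum>c\<in>C. x (h c) * e (h c) r) + x g * e g r"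
    if "\<And>c. c \<in> C' \<Longrightarrow> c \<notin> insert g (h ` C) \<Longrightarrow> x c = 0" for x r
    using sum_image_insert_neutral[OF fin h(1,2) g(1), of "\<lambda>c. x c * e c r"] that by simp
  show ?thesis unfolding full_row_rank_def
  proof
    fix r assume "r \<in> insert r\<^sub>0 R"
    then consider "r = r\<^sub>0" | "r \<in> R" by blast
    then show "\<exists>x. \<forall>r'\<in>insert r\<^sub>0 R. (\<Sum>c\<in>C'. x c * e c r') = (if r' = r then 1 else 0)"
    proof cases
      case 1
      define x where "x c = (if c = g then 1 / e g r\<^sub>0 else 0)" for c
      have "(\<Sum>c\<in>C'. x c * e c r') = (if r' = r then 1 else 0)" if "r' \<in> insert r\<^sub>0 R" for r'
      proof -
        have "(\<Sum>c\<in>C. x (h c) * e (h c) r') = 0"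
          using g(1) unfolding x_def by (intro sum.neutral) force
        then show ?thesis using split[of x r'] that 1 g r\<^sub>0 by (auto simp: x_def)
      qed
      then show ?thesis by blast
    next
      case 2
      obtain x where x: "\<And>r'. r' \<in> R \<Longrightarrow> (\<Sum>c\<in>C. x c * e c r') = (if r' = r then 1 else 0)"
        using rank 2 unfolding full_row_rank_def by blast
      define t where "t = (\<Sum>c\<in>C. x c * e (h c) r\<^sub>0)"
      define x' where "x' c' = (if c' = g then - t / e g r\<^sub>0
        else if c' \<in> h ` C then x (inv_into C h c') else 0)" for c'
      have x'h: "x' (h c) = x c" if "c \<in> C" for c
        using that g(1) h(1) by (auto simp: x'_def)
      have "(\<Sum>c\<in>C'. x' c * e c r') = (if r' = r then 1 else 0)" if "r' \<in> insert r\<^sub>0 R" for r'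
      proof -
        have "(\<Sum>c\<in>C'. x' c * e c r') = (\<Sum>c\<in>C. x c * e (h c) r') + x' g * e g r'"
          using split[of x' r'] x'h by (simp add: x'_def cong: sum.cong)
        then show ?thesis using that x h(3) g r\<^sub>0 2 by (auto simp: x'_def t_def)
      qed
      then show ?thesis by blast
    qed
  qed
qed

lemma rank_eq_dim_row_if_solvable:
  fixes A :: "real mat"
  assumes A: "A \<in> carrier_mat n nc"
    and solvable: "\<And>k. k < n \<Longrightarrow> \<exists>x \<in> carrier_vec nc. A *\<^sub>v x = unit_vec n k"
  shows "vec_space.rank n A = n"
proof -
  interpret vec_space "TYPE(real)" n .
  have cols: "set (cols A) \<subseteq> carrier_vec n" using A cols_dim by blast
  have "set (unit_vecs n) \<subseteq> span (set (cols A))"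
  proof
    fix u :: "real vec" assume "u \<in> set (unit_vecs n)"
    then obtain k where k: "k < n" "u = unit_vec n k" unfolding unit_vecs_def by auto
    obtain x where x: "x \<in> carrier_vec nc" "A *\<^sub>v x = unit_vec n k" using solvable[OF k(1)] by blast
    have "A *\<^sub>v x \<in> col_space A" unfolding col_space_eq[OF A] using A x by auto
    then show "u \<in> span (set (cols A))" using x k unfolding col_space_def by simp
  qed
  then have "span (set (unit_vecs n)) \<subseteq> span (set (cols A))"
    using span_subsetI[OF cols] by blast
  then have span: "span (set (cols A)) = carrier_vec n"
    using span_unit_vecs_is_carrier span_is_subset2[OF cols] by auto
  have vs: "vs (carrier_vec n) = V" by (simp add: module_vec_def)
  show ?thesis unfolding rank_def span vs using dim_is_n by simp
qed

lemma mem_graph_iff: "(a, b) \<in> Map.graph m \<longleftrightarrow> m a = Some b"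
  unfolding graph_def by simp

lemma graph_upd_None: "m k = None \<Longrightarrow> Map.graph (m(k \<mapsto> a)) = insert (k, a) (Map.graph m)"
  by (auto simp: mem_graph_iff split: if_splits simp del: graph_map_upd)

lemma graph_upd_Some:
  "m k = Some a \<Longrightarrow> Map.graph (m(k \<mapsto> b)) = insert (k, b) (Map.graph m - {(k, a)})"
  by (auto simp: mem_graph_iff split: if_splits simp del: graph_map_upd)

lemma graph_upd_pair:
  fixes m :: "'a \<Rightarrow> 'a option"
  shows "m s = None \<Longrightarrow> m t = None \<Longrightarrow> Map.graph (m(s \<mapsto> t, t \<mapsto> s)) = {(s, t), (t, s)} \<union> Map.graph m"
  by (auto simp: mem_graph_iff split: if_splits simp del: graph_map_upd)

lemma graph_remove_pair:
  fixes m :: "'a \<Rightarrow> 'a option"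
  shows "sym (Map.graph m) \<Longrightarrow> m x = Some y \<Longrightarrow>
    Map.graph (m(x := None, y := None)) = Map.graph m - {(x, y), (y, x)}"
  by (auto simp: mem_graph_iff split: if_splits dest: symD)

lemma graph_add_dash:
  "d s = None \<Longrightarrow> d t = None \<Longrightarrow> Map.graph (add_dash d s t) = {(s, t), (t, s)} \<union> Map.graph d"
  unfolding add_dash_def by (rule graph_upd_pair)

lemma add_dash_apply: "u \<notin> {s, t} \<Longrightarrow> add_dash d s t u = d u"
  unfolding add_dash_def by simp

lemma graph_del_dash:
  "sym (Map.graph d) \<Longrightarrow> d x = Some y \<Longrightarrow> Map.graph (del_dash d x y) = Map.graph d - {(x, y), (y, x)}"
  unfolding del_dash_def by (rule graph_remove_pair)

lemma del_dash_apply: "del_dash d x y u = (if u \<in> {x, y} then None else d u)"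
  unfolding del_dash_def by simp

lemma atLeastAtMost_1_4: "{1..4::nat} = insert 1 {2, 3, 4}"
  by auto

lemma prop_perm_bij:
  assumes "p < 8"
  shows "bij_betw (prop_perm p) {1..4} {1..4}"
proof -
  have four: "{1..4::nat} = {1, 2, 3, 4}" by auto
  consider "p = 0" | "p = 1" | "p = 2" | "p = 3" | "p = 4" | "p = 5" | "p = 6" | "p = 7"
    using assms by linarith
  then show ?thesis unfolding four by cases (simp_all add: bij_betw_def prop_perm_def insert_commute)
qed

lemma prop_perm_1:
  assumes "p < 8" "j \<in> {1..4}" "j \<notin> prop_perm p ` {2, 3, 4}"
  shows "prop_perm p 1 = j"
proof -
  have "j \<in> prop_perm p ` {1..4}" using prop_perm_bij[OF assms(1)] assms(2) by (simp add: bij_betw_def)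
  then show ?thesis using assms(3) unfolding atLeastAtMost_1_4 by blast
qed

definition corners :: "nat \<Rightarrow> nat \<Rightarrow> nat \<Rightarrow> (slot \<times> slot) set" where
  "corners v v' p = (\<lambda>i. ((v, i), (v', prop_perm p i))) ` {1..4}"

lemma set_prop_at_v':
  assumes "p < 8" "v \<noteq> v'" "k \<in> {1..4}"
  shows "set_prop c v v' p (v', prop_perm p k) = Some (v, k)"
proof -
  have bij: "bij_betw (prop_perm p) {1..4} {1..4}" by (rule prop_perm_bij[OF assms(1)])
  then have "(THE i. i \<in> {1..4} \<and> prop_perm p i = prop_perm p k) = k"
    using assms(3) unfolding bij_betw_def inj_on_def by blast
  then show ?thesis using assms bij unfolding set_prop_def bij_betw_def by auto
qed

lemma graph_set_prop:
  assumes p: "p < 8" and "v \<noteq> v'" and c: "fst ` dom c \<inter> {v, v'} = {}"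
  shows "Map.graph (set_prop c v v' p) = Map.graph c \<union> corners v v' p \<union> (corners v v' p)\<inverse>"
proof (intro Set.set_eqI iffI)
  fix e :: "slot \<times> slot"
  obtain w i t where e: "e = ((w, i), t)" by (metis prod.exhaust)
  note at_v' = set_prop_at_v'[OF p \<open>v \<noteq> v'\<close>]
  show "e \<in> Map.graph c \<union> corners v v' p \<union> (corners v v' p)\<inverse>" if "e \<in> Map.graph (set_prop c v v' p)"
  proof -
    have st: "set_prop c v v' p (w, i) = Some t" using that e by (simp add: mem_graph_iff)
    consider "w = v" "i \<in> {1..4}" | "w = v'" "i \<in> {1..4}" | "(w, i) \<notin> {v, v'} \<times> {1..4}"
      by auto
    then show ?thesis
    proof cases
      case 1
      then show ?thesis using st e unfolding set_prop_def corners_def by auto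
    next
      case 2
      then have "i \<in> prop_perm p ` {1..4}" using prop_perm_bij[OF p] by (simp add: bij_betw_def)
      then obtain k where "k \<in> {1..4}" "i = prop_perm p k" by blast
      then show ?thesis using st e 2 at_v' unfolding corners_def by auto
    next
      case 3
      then show ?thesis using st e \<open>v \<noteq> v'\<close> unfolding set_prop_def by (auto simp: mem_graph_iff)
    qed
  qed
  show "e \<in> Map.graph (set_prop c v v' p)" if "e \<in> Map.graph c \<union> corners v v' p \<union> (corners v v' p)\<inverse>"
  proof -
    from that consider "c (w, i) = Some t" | k where "k \<in> {1..4}" "e = ((v, k), (v', prop_perm p k))"
      | k where "k \<in> {1..4}" "e = ((v', prop_perm p k), (v, k))"
      unfolding corners_def e by (blast dest: in_graphD)
    then show ?thesis
    proof cases
      case 1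
      then have "fst (w, i) \<notin> {v, v'}" using c by blast
      then show ?thesis using 1 e by (simp add: mem_graph_iff set_prop_def)
    next
      case 2
      then show ?thesis by (simp add: mem_graph_iff set_prop_def)
    next
      case 3
      then show ?thesis by (simp add: mem_graph_iff at_v')
    qed
  qed
qed

lemma mate_set_prop:
  assumes "cor G' = set_prop (cor G) v v' p" "v \<noteq> v'"
  shows "mate G' v = v'" "mate G' v' = v" "w \<notin> {v, v'} \<Longrightarrow> mate G' w = mate G w"
  using assms by (simp_all add: mate_def set_prop_def)

section \<open>Edges, faces and the matrix \<open>E\<close>\<close>

lemma sym_gadj: "sym (gadj G)"
  unfolding gadj_def by (rule sym_Un_converse)

lemma gedges_subset_gadj: "gedges G \<subseteq> gadj G"
  unfolding gadj_def by blast

lemma gedges_graph: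
  "gedges G = (\<lambda>(w, s). ((w, 1), s)) ` Map.graph (par G) \<union> Map.graph (dsh G) \<union> Map.graph (cor G)
     \<union> {((0, 1), (0, 2))}"
  unfolding gedges_def graph_def by auto

lemma gedges_upper:
  assumes "Map.graph (par G') \<subseteq> Map.graph (par G) \<union> NP"
    and "Map.graph (dsh G') \<subseteq> Map.graph (dsh G) \<union> ND" and "Map.graph (cor G') \<subseteq> Map.graph (cor G) \<union> NC"
  shows "gedges G' \<subseteq> gedges G \<union> ((\<lambda>(w, s). ((w, 1), s)) ` NP \<union> ND \<union> NC)"
proof -
  have "(\<lambda>(w, s). ((w, 1::nat), s)) ` Map.graph (par G') \<subseteq>
      (\<lambda>(w, s). ((w, 1), s)) ` Map.graph (par G) \<union> (\<lambda>(w, s). ((w, 1), s)) ` NP"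
    using image_mono[OF assms(1)] by (simp add: image_Un)
  then show ?thesis using assms(2,3) unfolding gedges_graph by blast
qed

lemma gedges_lower:
  assumes "Map.graph (par G) - DP \<subseteq> Map.graph (par G')"
    and "Map.graph (dsh G) - DD \<subseteq> Map.graph (dsh G')" and "Map.graph (cor G) \<subseteq> Map.graph (cor G')"
  shows "gedges G - ((\<lambda>(w, s). ((w, 1), s)) ` DP \<union> DD) \<subseteq> gedges G'"
proof -
  have "(\<lambda>(w, s). ((w, 1::nat), s)) ` Map.graph (par G) - (\<lambda>(w, s). ((w, 1), s)) ` DP \<subseteq>
      (\<lambda>(w, s). ((w, 1), s)) ` Map.graph (par G')"
    using image_mono[OF assms(1)] by (metis (no_types, lifting) image_diff_subset subset_trans)
  then show ?thesis using assms(2,3) unfolding gedges_graph by blast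
qed

lemma all_slots_insert: "all_slots (insert v V) = all_slots V \<union> (\<lambda>i. (v, i)) ` {1..4}"
  unfolding all_slots_def true_slots_def by auto

lemma finite_all_slots: "finite V \<Longrightarrow> finite (all_slots V)"
proof -
  assume "finite V"
  moreover have "true_slots V = V \<times> {1..4}" unfolding true_slots_def by auto
  ultimately show ?thesis unfolding all_slots_def by auto
qed

lemma finite_faces: "finite (verts G) \<Longrightarrow> finite (faces G)"
  unfolding faces_def quotient_def by (auto dest: finite_all_slots)

definition face_coeff :: "slot set \<Rightarrow> nat \<Rightarrow> real" where
  "face_coeff f w = real (card {i\<in>{1,2::nat}. (w, i) \<in> f}) - real (card {i\<in>{3,4::nat}. (w, i) \<in> f})"

lemma face_coeff_Un_other:
  assumes "w \<notin> fst ` B"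
  shows "face_coeff (C \<union> B) w = face_coeff C w"
proof -
  have "(w, i) \<notin> B" for i using assms by force
  then show ?thesis unfolding face_coeff_def by simp
qed

lemma face_coeff_pair_neq_0:
  assumes "w \<noteq> w'" "i \<in> {1..4}"
  shows "face_coeff {(w, i), (w', j)} w \<noteq> 0"
proof -
  have slots: "{k\<in>{1,2::nat}. (w, k) \<in> {(w, i), (w', j)}} = {1, 2} \<inter> {i}"
    "{k\<in>{3,4::nat}. (w, k) \<in> {(w, i), (w', j)}} = {3, 4} \<inter> {i}"
    using assms(1) by auto
  have "i = 1 \<or> i = 2 \<or> i = 3 \<or> i = 4" using assms(2) by auto
  then show ?thesis unfolding face_coeff_def slots by (elim disjE) simp_all
qed

lemma rankE_eq_card_wavy:
  assumes fin: "finite (verts G)" and rank: "full_row_rank face_coeff (faces G) (wavy G)"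
  shows "rankE G = card (wavy G)"
proof (cases "verts G = {}")
  case True
  then show ?thesis unfolding rankE_def wavy_def by simp
next
  case False
  define rs where "rs = sorted_list_of_set (wavy G)"
  define fs where "fs = (SOME fs. distinct fs \<and> set fs = faces G)"
  have "distinct fs \<and> set fs = faces G"
    unfolding fs_def by (rule someI_ex) (use finite_distinct_list[OF finite_faces[OF fin]] in blast)
  then have fs: "distinct fs" "set fs = faces G" by auto
  have "finite (wavy G)" using fin unfolding wavy_def by auto
  then have rs: "distinct rs" "set rs = wavy G" "length rs = card (wavy G)"
    unfolding rs_def by auto
  have E: "Emat G = mat (length rs) (length fs) (\<lambda>(r, c). face_coeff (fs ! c) (rs ! r))"
    unfolding Emat_def rs_def fs_def face_coeff_def Let_def by simp
  have "vec_space.rank (length rs) (Emat G) = length rs"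
  proof (rule rank_eq_dim_row_if_solvable)
    show "Emat G \<in> carrier_mat (length rs) (length fs)" unfolding E by simp
  next
    fix k assume k: "k < length rs"
    obtain c where c: "\<And>u. u \<in> wavy G \<Longrightarrow>
        (\<Sum>f\<in>faces G. c f * face_coeff f u) = (if u = rs ! k then 1 else 0)"
      using rank nth_mem[OF k] unfolding full_row_rank_def rs(2) by blast
    define x where "x = vec (length fs) (\<lambda>j. c (fs ! j))"
    have "Emat G *\<^sub>v x = unit_vec (length rs) k"
    proof (rule eq_vecI)
      fix r assume "r < dim_vec (unit_vec (length rs) k)"
      then have r: "r < length rs" by simp
      have "(Emat G *\<^sub>v x) $ r = (\<Sum>j<length fs. c (fs ! j) * face_coeff (fs ! j) (rs ! r))"
        unfolding E x_def using r by (simp add: scalar_prod_def atLeast0LessThan mult.commute)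
      also have "\<dots> = (\<Sum>f\<in>faces G. c f * face_coeff f (rs ! r))"
        using sum.reindex_bij_betw[OF bij_betw_nth[OF fs(1) refl refl]] fs(2) by simp
      also have "\<dots> = unit_vec (length rs) k $ r"
        using c[OF nth_mem[OF r, unfolded rs(2)]] rs(1) r k nth_eq_iff_index_eq
        by (auto simp: unit_vec_def)
      finally show "(Emat G *\<^sub>v x) $ r = unit_vec (length rs) k $ r" .
    qed (simp add: E)
    then show "\<exists>x \<in> carrier_vec (length fs). Emat G *\<^sub>v x = unit_vec (length rs) k"
      unfolding x_def by auto
  qed
  then show ?thesis using False rs(3) unfolding rankE_def E by simp
qed

section \<open>The invariant of melonic graphs\<close>

definition melonic_inv :: "mgraph \<Rightarrow> bool" where
  "melonic_inv G \<longleftrightarrow> finite (verts G) \<and> 0 \<notin> verts G \<and>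
     gadj G \<subseteq> all_slots (verts G) \<times> all_slots (verts G) \<and> sym (Map.graph (dsh G)) \<and>
     card (verts G) = 2 * card (wavy G) \<and> card (faces G) = 3 * card (wavy G) + 1 \<and>
     full_row_rank face_coeff (faces G) (wavy G)"

lemma degree_eq_0_if_melonic_inv:
  assumes "melonic_inv G"
  shows "degree G = 0"
  using assms rankE_eq_card_wavy[of G] unfolding melonic_inv_def degree_def nfaces_def by simp

lemma melonic_inv_trivial_graph: "melonic_inv trivial_graph"
proof -
  have verts: "verts trivial_graph = {}" unfolding verts_def trivial_graph_def by simp
  have gadj: "gadj trivial_graph = {((0, 1), (0, 2)), ((0, 2), (0, 1))}"
    unfolding gadj_def gedges_def trivial_graph_def by (auto split: if_splits)
  have "gadj trivial_graph `` {(0, 1), (0, 2)} \<subseteq> {(0, 1), (0, 2)}" unfolding gadj by auto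
  then have "(gadj trivial_graph)\<^sup>* `` {(0, 1), (0, 2)} = {(0, 1), (0, 2)}"
    by (rule Image_closed_trancl)
  then have "(gadj trivial_graph)\<^sup>* `` {(0, 1)} = {(0, 1), (0, 2)}"
    "(gadj trivial_graph)\<^sup>* `` {(0, 2)} = {(0, 1), (0, 2)}"
    unfolding gadj by blast+
  then have "faces trivial_graph = {{(0, 1), (0, 2)}}"
    unfolding faces_def verts all_slots_def true_slots_def quotient_def by auto
  moreover have "sym (Map.graph (dsh trivial_graph))"
    unfolding trivial_graph_def graph_def sym_def by auto
  ultimately show ?thesis
    unfolding melonic_inv_def full_row_rank_def wavy_def verts gadj by (auto simp: all_slots_def)
qed

section \<open>Melonic insertions\<close>

text \<open>
  Inserting \<open>v, v'\<close> into the edge \<open>x\<close>--\<open>y\<close> of \<open>\<Gamma>\<close> creates these edges: the path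
  \<open>x\<close>--\<open>(v, 1)\<close>--\<open>(v', \<pi> 1)\<close>--\<open>y\<close>, whose middle edge is a corner, and the other three corners.
\<close>
definition insertion_edges :: "slot \<Rightarrow> slot \<Rightarrow> nat \<Rightarrow> nat \<Rightarrow> nat \<Rightarrow> (slot \<times> slot) set" where
  "insertion_edges x y v v' p = {(x, (v, 1)), ((v', prop_perm p 1), y)} \<union> corners v v' p"

locale fresh_vertices =
  fixes G :: mgraph and v v' p :: nat
  assumes inv: "melonic_inv G"
    and new: "v \<notin> verts G" "v' \<notin> verts G" "v \<noteq> v'" "v \<noteq> 0" "v' \<noteq> 0"
    and p: "p < 8"
begin

abbreviation "S \<equiv> all_slots (verts G)"
abbreviation "\<pi> \<equiv> prop_perm p"

lemma gadj_G: "gadj G \<subseteq> S \<times> S"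
  using inv unfolding melonic_inv_def by blast

lemma finite_verts: "finite (verts G)"
  using inv unfolding melonic_inv_def by blast

lemma new_slots_notin_S: "fst s \<in> {v, v'} \<Longrightarrow> s \<notin> S"
  using new unfolding all_slots_def true_slots_def by auto

lemma \<pi>_bij: "bij_betw \<pi> {1..4} {1..4}"
  using prop_perm_bij[OF p] .

lemma \<pi>_range: "i \<in> {1..4} \<Longrightarrow> \<pi> i \<in> {1..4}"
  using \<pi>_bij by (auto simp: bij_betw_def)

lemma \<pi>_inj: "i \<in> {1..4} \<Longrightarrow> j \<in> {1..4} \<Longrightarrow> \<pi> i = \<pi> j \<longleftrightarrow> i = j"
  using \<pi>_bij by (auto simp: bij_betw_def inj_on_def)

lemma dsh_sym: "sym (Map.graph (dsh G))"
  using inv unfolding melonic_inv_def by blast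

lemma gadj_avoids_new: "(s, t) \<in> gadj G \<Longrightarrow> fst s \<notin> {v, v'} \<and> fst t \<notin> {v, v'}"
  using gadj_G new_slots_notin_S by blast

lemma dsh_at_new:
  assumes "fst s \<in> {v, v'}"
  shows "dsh G s = None"
proof (rule ccontr)
  assume "dsh G s \<noteq> None"
  then obtain t where "dsh G s = Some t" by blast
  then have "(s, t) \<in> gadj G" using gedges_subset_gadj unfolding gedges_def by blast
  then show False using gadj_avoids_new assms by blast
qed

lemma par_at_new: "par G v = None" "par G v' = None"
  using new unfolding verts_def by auto

lemma graph_cor: "Map.graph (set_prop (cor G) v v' p) = Map.graph (cor G) \<union> corners v v' p \<union> (corners v v' p)\<inverse>"
proof -
  have "s \<in> S" if "cor G s = Some t" for s t
    using that gadj_G unfolding gadj_def gedges_def by blast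
  then have "fst ` dom (cor G) \<inter> {v, v'} = {}"
    using new_slots_notin_S by blast
  then show ?thesis by (rule graph_set_prop[OF p new(3)])
qed

end

locale melonic_insertion = fresh_vertices +
  fixes G' :: mgraph and x y :: slot
  assumes verts': "verts G' = insert v (insert v' (verts G))"
    and cor': "cor G' = set_prop (cor G) v v' p"
    and dsh'_sym: "sym (Map.graph (dsh G'))"
    and xy: "(x, y) \<in> gadj G"
    and old_edges: "gedges G - {(x, y), (y, x)} \<subseteq> gadj G'"
    and path_edges: "((v, 1), x) \<in> gadj G'" "((v', prop_perm p 1), y) \<in> gadj G'"
    and new_edges: "gedges G' \<subseteq> gadj G \<union> insertion_edges x y v v' p \<union> (insertion_edges x y v v' p)\<inverse>"
begin

abbreviation "K \<equiv> (\<lambda>i. ((v, i), (v', \<pi> i))) ` {2, 3, 4}"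
abbreviation "attach \<equiv> \<lambda>C. if x \<in> C then C \<union> {(v, 1), (v', \<pi> 1)} else C"

lemma xy_S: "x \<in> S" "y \<in> S"
  using xy gadj_G by auto

lemma insertion_edges_eq:
  "insertion_edges x y v v' p = {(x, (v, 1)), ((v, 1), (v', \<pi> 1)), ((v', \<pi> 1), y)} \<union> K"
  unfolding insertion_edges_def corners_def atLeastAtMost_1_4 image_insert by blast

lemma Field_K: "Field K = (\<lambda>i. (v, i)) ` {2, 3, 4} \<union> (\<lambda>i. (v', \<pi> i)) ` {2, 3, 4}"
  unfolding Field_def Domain_fst Range_snd image_image by simp

lemma all_slots': "all_slots (verts G') = S \<union> {(v, 1), (v', \<pi> 1)} \<union> Field K"
proof -
  have v'_slots: "(\<lambda>i. (v', i)) ` {1..4} = (\<lambda>i. (v', \<pi> i)) ` {1..4}"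
    using \<pi>_bij by (metis bij_betw_def image_image)
  show ?thesis
    unfolding verts' all_slots_insert v'_slots Field_K unfolding atLeastAtMost_1_4 image_insert by auto
qed

lemma Field_K_new: "Field K \<inter> (S \<union> {(v, 1), (v', \<pi> 1)}) = {}"
proof -
  have "\<pi> i \<noteq> \<pi> 1" if "i \<in> {2, 3, 4}" for i using that \<pi>_inj[of i 1] by auto
  then show ?thesis unfolding Field_K using new_slots_notin_S new(3) by auto
qed

lemma K_closed: "(c, d) \<in> K \<Longrightarrow> (K \<union> K\<inverse>) `` {c, d} \<subseteq> {c, d}"
  using \<pi>_inj new(3) by auto

lemma corners_gadj': "corners v v' p \<subseteq> gadj G'"
proof -
  have "corners v v' p \<subseteq> Map.graph (cor G')" unfolding cor' graph_cor by blast
  then show ?thesis using gedges_subset_gadj unfolding gedges_graph by blast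
qed

lemma gadj'_lower:
  "gadj G - {(x, y), (y, x)} \<union> insertion_edges x y v v' p \<subseteq> gadj G'"
proof -
  have "gadj G - {(x, y), (y, x)} \<subseteq> gadj G'"
    using old_edges sym_gadj[of G'] unfolding gadj_def by (auto dest: symD)
  moreover have "(x, (v, 1)) \<in> gadj G'" using path_edges(1) sym_gadj by (blast dest: symD)
  ultimately show ?thesis using path_edges(2) corners_gadj' unfolding insertion_edges_def by blast
qed

lemma gadj'_upper:
  "gadj G' \<subseteq> gadj G \<union> insertion_edges x y v v' p \<union> (insertion_edges x y v v' p)\<inverse>"
  using new_edges sym_gadj[of G] unfolding gadj_def[of G'] by (auto dest: symD)

lemma path_slots_notin_S: "(v, 1) \<notin> S" "(v', \<pi> 1) \<notin> S"
  using new_slots_notin_S by auto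

lemma faces': "faces G' = attach ` faces G \<union> (\<lambda>(c, d). {c, d}) ` K"
proof -
  interpret sub: edge_subdivision S "gadj G" "gadj G'" K x y "(v, 1)" "(v', \<pi> 1)"
    using gadj_G sym_gadj xy path_slots_notin_S Field_K_new K_closed gadj'_lower gadj'_upper
    by unfold_locales (simp_all add: insertion_edges_eq)
  show ?thesis unfolding faces_def all_slots' by (rule sub.quotient_subdivided)
qed

lemma faces_subset: "C \<in> faces G \<Longrightarrow> C \<subseteq> S"
  unfolding faces_def using gadj_G by (rule quotient_rtrancl_subset)

lemma inj_on_attach: "inj_on attach (faces G)"
proof
  fix C D assume CD: "C \<in> faces G" "D \<in> faces G" "attach C = attach D"
  have "attach E \<inter> S = E" if "E \<in> faces G" for E
  proof -
    have "{(v, 1), (v', \<pi> 1)} \<inter> S = {}" using path_slots_notin_S by blast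
    then show ?thesis using faces_subset[OF that] by (simp add: Int_Un_distrib2 Int_absorb2)
  qed
  then have "C = attach C \<inter> S" "D = attach D \<inter> S" using CD(1,2) by simp_all
  then show "C = D" using CD(3) by simp
qed

lemma corner_faces_new: "attach ` faces G \<inter> (\<lambda>(c, d). {c, d}) ` K = {}"
proof (intro equals0I)
  fix F assume "F \<in> attach ` faces G \<inter> (\<lambda>(c, d). {c, d}) ` K"
  then obtain C c d where C: "C \<in> faces G" "F = attach C" and cd: "(c, d) \<in> K" "F = {c, d}"
    by blast
  have "attach C \<subseteq> S \<union> {(v, 1), (v', \<pi> 1)}" using faces_subset[OF C(1)] by auto
  moreover have "c \<in> Field K" using cd(1) by (rule FieldI1)
  ultimately show False using Field_K_new C(2) cd(2) by blast
qed

lemma card_faces': "card (faces G') = card (faces G) + 3"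
proof -
  have corner_faces: "(\<lambda>(c, d). {c, d}) ` K = (\<lambda>i. {(v, i), (v', \<pi> i)}) ` {2, 3, 4}"
    unfolding image_image by simp
  have "inj_on (\<lambda>i. {(v, i), (v', \<pi> i)}) {2, 3, 4}"
  proof (rule inj_onI)
    fix i j assume "{(v, i), (v', \<pi> i)} = {(v, j), (v', \<pi> j)}"
    then have "(v, i) \<in> {(v, j), (v', \<pi> j)}" by (metis insertI1)
    then show "i = j" using new(3) by simp
  qed
  then have "card ((\<lambda>(c, d). {c, d}) ` K) = 3" unfolding corner_faces by (simp add: card_image)
  moreover have "card (attach ` faces G) = card (faces G)" using inj_on_attach by (rule card_image)
  moreover have "card (faces G') = card (attach ` faces G) + card ((\<lambda>(c, d). {c, d}) ` K)"
  proof -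
    have "finite (attach ` faces G)" using finite_faces[OF finite_verts] by (rule finite_imageI)
    moreover have "finite ((\<lambda>(c, d). {c, d}) ` K)" unfolding corner_faces by (rule finite_imageI) simp
    ultimately show ?thesis unfolding faces' using corner_faces_new by (rule card_Un_disjoint)
  qed
  ultimately show ?thesis by presburger
qed

lemma wavy': "wavy G' = insert (min v v') (wavy G)"
proof -
  note mate' = mate_set_prop[OF cor' new(3)]
  have "wavy G' = {w \<in> {v, v'}. w < mate G' w} \<union> {w \<in> verts G. w < mate G' w}"
    unfolding wavy_def verts' by blast
  moreover have "{w \<in> {v, v'}. w < mate G' w} = {min v v'}"
    using mate'(1,2) new(3) by (auto simp: min_def)
  moreover have "mate G' w = mate G w" if "w \<in> verts G" for w
    using mate'(3)[of w] new(1,2) that by blast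
  then have "{w \<in> verts G. w < mate G' w} = wavy G"
    unfolding wavy_def by (auto simp del: insert_iff)
  ultimately show ?thesis by simp
qed

lemma min_notin_wavy: "min v v' \<notin> wavy G"
  using new unfolding wavy_def by (auto simp: min_def)

lemma full_row_rank': "full_row_rank face_coeff (faces G') (wavy G')"
  unfolding wavy'
proof (rule full_row_rank_extend)
  show "full_row_rank face_coeff (faces G) (wavy G)" using inv unfolding melonic_inv_def by blast
  show "finite (faces G')" using finite_verts by (simp add: finite_faces verts')
  show "inj_on attach (faces G)" by (rule inj_on_attach)
  show "attach ` faces G \<subseteq> faces G'" unfolding faces' by blast
  have old_row: "w \<notin> fst ` {(v, i), (v', j)}" if "w \<in> wavy G" for w i j
    using that new unfolding wavy_def by auto
  show "face_coeff (attach C) w = face_coeff C w" if "C \<in> faces G" "w \<in> wavy G" for C w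
    using face_coeff_Un_other[OF old_row[OF that(2)]] by simp
  show "{(v, 2), (v', \<pi> 2)} \<in> faces G' - attach ` faces G"
    using corner_faces_new unfolding faces' by force
  show "face_coeff {(v, 2), (v', \<pi> 2)} w = 0" if "w \<in> wavy G" for w
    using face_coeff_Un_other[OF old_row[OF that], of "{}"] by (simp add: face_coeff_def)
  show "face_coeff {(v, 2), (v', \<pi> 2)} (min v v') \<noteq> 0"
  proof (cases "v < v'")
    case True
    then show ?thesis using face_coeff_pair_neq_0[of v v' 2] new(3) by (simp add: min_def)
  next
    case False
    then show ?thesis using face_coeff_pair_neq_0[of v' v "\<pi> 2" 2] new(3) \<pi>_range[of 2]
      by (simp add: min_def insert_commute)
  qed
qed (rule min_notin_wavy)

lemma melonic_inv': "melonic_inv G'"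
proof -
  have S': "all_slots (verts G') = S \<union> {(v, 1), (v', \<pi> 1)} \<union> Field K" by (rule all_slots')
  have "insertion_edges x y v v' p \<subseteq> all_slots (verts G') \<times> all_slots (verts G')"
    unfolding insertion_edges_eq S' using xy_S by (auto intro: FieldI1 FieldI2)
  then have "gadj G' \<subseteq> all_slots (verts G') \<times> all_slots (verts G')"
    using gadj'_upper gadj_G unfolding S' by blast
  moreover have "card (verts G') = card (verts G) + 2"
    using finite_verts new unfolding verts' by simp
  moreover have "finite (wavy G)" using finite_verts unfolding wavy_def by simp
  then have "card (wavy G') = card (wavy G) + 1" unfolding wavy' using min_notin_wavy by simp
  ultimately show ?thesis
    using inv new dsh'_sym card_faces' full_row_rank' unfolding melonic_inv_def verts' by auto
qed

end

context fresh_vertices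
begin

lemma melonic_inv_insertion:
  fixes G' :: mgraph and x y :: slot and NP DP :: "(nat \<times> slot) set" and ND DD :: "(slot \<times> slot) set"
  assumes verts': "verts G' = insert v (insert v' (verts G))"
    and cor': "cor G' = set_prop (cor G) v v' p"
    and xy: "(x, y) \<in> gadj G"
    and par': "Map.graph (par G') = NP \<union> (Map.graph (par G) - DP)"
    and dsh': "Map.graph (dsh G') = ND \<union> (Map.graph (dsh G) - DD)" "sym ND" "sym DD"
    and removed: "(\<lambda>(w, s). ((w, 1), s)) ` DP \<union> DD \<subseteq> {(x, y), (y, x)}"
    and added: "(\<lambda>(w, s). ((w, 1), s)) ` NP \<union> ND \<subseteq>
      insertion_edges x y v v' p \<union> (insertion_edges x y v v' p)\<inverse>"
    and path: "(v, x) \<in> NP"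
      "((v', \<pi> 1), y) \<in> (\<lambda>(w, s). ((w, 1), s)) ` NP \<union> ND \<union> ((\<lambda>(w, s). ((w, 1), s)) ` NP \<union> ND)\<inverse>"
  shows "melonic_inv G'"
proof -
  let ?f = "\<lambda>(w, s). ((w, 1::nat), s)"
  have cor: "Map.graph (cor G') = Map.graph (cor G) \<union> (corners v v' p \<union> (corners v v' p)\<inverse>)"
    unfolding cor' graph_cor by blast
  have lower: "gedges G - (?f ` DP \<union> DD) \<subseteq> gedges G'"
    by (rule gedges_lower) (unfold par' dsh'(1) cor, auto)
  have upper: "gedges G' \<subseteq> gedges G \<union> (?f ` NP \<union> ND \<union> (corners v v' p \<union> (corners v v' p)\<inverse>))"
    by (rule gedges_upper) (unfold par' dsh'(1) cor, auto)
  have "?f ` NP \<union> ND \<subseteq> gedges G'" unfolding gedges_graph par' dsh'(1) by blast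
  then have new_gadj: "?f ` NP \<union> ND \<union> (?f ` NP \<union> ND)\<inverse> \<subseteq> gadj G'"
    unfolding gadj_def by blast
  show ?thesis
  proof (rule melonic_insertion.melonic_inv'[of G v v' p G' x y],
      intro melonic_insertion.intro fresh_vertices_axioms melonic_insertion_axioms.intro)
    show "sym (Map.graph (dsh G'))"
      using dsh_sym dsh'(2,3) unfolding dsh'(1) sym_def by blast
    show "gedges G - {(x, y), (y, x)} \<subseteq> gadj G'"
      using lower removed gedges_subset_gadj[of G'] by blast
    have "par G' v = Some x" using path(1) par' by (simp add: mem_graph_iff[symmetric])
    then show "((v, 1), x) \<in> gadj G'" using gedges_subset_gadj unfolding gedges_def by blast
    show "((v', \<pi> 1), y) \<in> gadj G'" using subsetD[OF new_gadj path(2)] .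
    have "?f ` NP \<union> ND \<union> (corners v v' p \<union> (corners v v' p)\<inverse>) \<subseteq>
        insertion_edges x y v v' p \<union> (insertion_edges x y v v' p)\<inverse>"
      using added unfolding insertion_edges_def by blast
    from order_trans[OF upper Un_mono[OF gedges_subset_gadj this]]
    show "gedges G' \<subseteq> gadj G \<union> insertion_edges x y v v' p \<union> (insertion_edges x y v v' p)\<inverse>"
      by (simp only: Un_assoc)
  qed (use verts' cor' xy in simp_all)
qed

lemma melonic_inv_insI:
  assumes dxy: "dsh G x = Some y" and b: "b \<in> {3, 4}"
    and pp: "\<pi> 2 = 2" "\<pi> 3 = b" "\<pi> 4 = 7 - b"
  shows "melonic_inv \<lparr>par = (par G)(v \<mapsto> x, v' \<mapsto> y),
              dsh = add_dash (add_dash (add_dash (del_dash (dsh G) x y)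
                       (v,2) (v',2)) (v,3) (v',b)) (v,4) (v',7-b),
              cor = set_prop (cor G) v v' p\<rparr>" (is "melonic_inv ?G'")
proof -
  have xy: "(x, y) \<in> gadj G" using dxy gedges_subset_gadj unfolding gedges_def by blast
  note xy_old = gadj_avoids_new[OF xy]
  have b_facts: "b \<noteq> 2" "7 - b \<noteq> 2" "7 - b \<noteq> b" using b by auto
  have p1: "\<pi> 1 = 1" using b pp by (intro prop_perm_1[OF p]) auto
  have corners: "corners v v' p = {((v,1),(v',1)), ((v,2),(v',2)), ((v,3),(v',b)), ((v,4),(v',7-b))}"
    unfolding corners_def atLeastAtMost_1_4 using p1 pp by simp
  let ?ND = "{((v,2),(v',2)), ((v',2),(v,2)), ((v,3),(v',b)), ((v',b),(v,3)), ((v,4),(v',7-b)), ((v',7-b),(v,4))}"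
  show ?thesis
  proof (rule melonic_inv_insertion[where NP = "{(v, x), (v', y)}" and DP = "{}"
        and ND = ?ND and DD = "{(x, y), (y, x)}"])
    show "Map.graph (par ?G') = {(v, x), (v', y)} \<union> (Map.graph (par G) - {})"
      using par_at_new new(3) by (simp add: graph_upd_None insert_commute del: graph_map_upd)
    show "Map.graph (dsh ?G') = ?ND \<union> (Map.graph (dsh G) - {(x, y), (y, x)})"
      using b_facts new(3) xy_old
      by (simp add: graph_add_dash graph_del_dash[OF dsh_sym dxy] add_dash_apply del_dash_apply dsh_at_new)
  qed (use xy p1 in \<open>auto simp: verts_def sym_def insertion_edges_def corners\<close>)
qed

lemma melonic_inv_insII:
  assumes dxy: "dsh G x = Some y" and b: "b \<in> {3, 4}"
    and pp: "\<pi> 2 = 1" "\<pi> 3 = b" "\<pi> 4 = 7 - b"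
  shows "melonic_inv \<lparr>par = (par G)(v \<mapsto> x, v' \<mapsto> (v,2)),
              dsh = add_dash (add_dash (add_dash (del_dash (dsh G) x y)
                       (v',2) y) (v,3) (v',b)) (v,4) (v',7-b),
              cor = set_prop (cor G) v v' p\<rparr>" (is "melonic_inv ?G'")
proof -
  have xy: "(x, y) \<in> gadj G" using dxy gedges_subset_gadj unfolding gedges_def by blast
  note xy_old = gadj_avoids_new[OF xy]
  have y_new: "(v, i) \<noteq> y" "(v', i) \<noteq> y" "y \<noteq> (v, i)" "y \<noteq> (v', i)" for i
    using xy_old by auto
  have b_facts: "b \<noteq> 2" "7 - b \<noteq> 2" "7 - b \<noteq> b" using b by auto
  have p1: "\<pi> 1 = 2" using b pp by (intro prop_perm_1[OF p]) auto
  have corners: "corners v v' p = {((v,1),(v',2)), ((v,2),(v',1)), ((v,3),(v',b)), ((v,4),(v',7-b))}"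
    unfolding corners_def atLeastAtMost_1_4 using p1 pp by simp
  let ?ND = "{((v',2),y), (y,(v',2)), ((v,3),(v',b)), ((v',b),(v,3)), ((v,4),(v',7-b)), ((v',7-b),(v,4))}"
  show ?thesis
  proof (rule melonic_inv_insertion[where NP = "{(v, x), (v', (v,2))}" and DP = "{}"
        and ND = ?ND and DD = "{(x, y), (y, x)}"])
    show "Map.graph (par ?G') = {(v, x), (v', (v,2))} \<union> (Map.graph (par G) - {})"
      using par_at_new new(3) by (simp add: graph_upd_None insert_commute del: graph_map_upd)
    show "Map.graph (dsh ?G') = ?ND \<union> (Map.graph (dsh G) - {(x, y), (y, x)})"
      using b_facts new(3) xy_old y_new
      by (simp add: graph_add_dash graph_del_dash[OF dsh_sym dxy] add_dash_apply del_dash_apply dsh_at_new)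
  qed (use xy p1 in \<open>auto simp: verts_def sym_def insertion_edges_def corners\<close>)
qed

lemma melonic_inv_insIII:
  assumes dxy: "dsh G x = Some y" and a: "a \<in> {3, 4}" and c: "c \<in> {3, 4}"
    and pp: "\<pi> a = 1" "\<pi> 2 = c" "\<pi> (7 - a) = 2"
  shows "melonic_inv \<lparr>par = (par G)(v \<mapsto> x, v' \<mapsto> (v,a)),
              dsh = add_dash (add_dash (add_dash (del_dash (dsh G) x y)
                       (v,2) (v',c)) (v,7-a) (v',2)) (v',7-c) y,
              cor = set_prop (cor G) v v' p\<rparr>" (is "melonic_inv ?G'")
proof -
  have xy: "(x, y) \<in> gadj G" using dxy gedges_subset_gadj unfolding gedges_def by blast
  note xy_old = gadj_avoids_new[OF xy]
  have y_new: "(v, i) \<noteq> y" "(v', i) \<noteq> y" "y \<noteq> (v, i)" "y \<noteq> (v', i)" for i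
    using xy_old by auto
  have ac_facts: "a \<noteq> 2" "7 - a \<noteq> 2" "7 - a \<noteq> a" "c \<noteq> 2" "7 - c \<noteq> 2" "7 - c \<noteq> c"
    using a c by auto
  have p1: "\<pi> 1 = 7 - c" using a c pp by (intro prop_perm_1[OF p]) auto
  have "{1..4::nat} = {1, 2, a, 7 - a}" using a by auto
  then have corners: "corners v v' p = {((v,1),(v',7-c)), ((v,2),(v',c)), ((v,a),(v',1)), ((v,7-a),(v',2))}"
    unfolding corners_def using p1 pp by simp
  let ?ND = "{((v,2),(v',c)), ((v',c),(v,2)), ((v,7-a),(v',2)), ((v',2),(v,7-a)), ((v',7-c),y), (y,(v',7-c))}"
  show ?thesis
  proof (rule melonic_inv_insertion[where NP = "{(v, x), (v', (v,a))}" and DP = "{}"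
        and ND = ?ND and DD = "{(x, y), (y, x)}"])
    show "Map.graph (par ?G') = {(v, x), (v', (v,a))} \<union> (Map.graph (par G) - {})"
      using par_at_new new(3) by (simp add: graph_upd_None insert_commute del: graph_map_upd)
    show "Map.graph (dsh ?G') = ?ND \<union> (Map.graph (dsh G) - {(x, y), (y, x)})"
      using ac_facts new(3) xy_old y_new
      by (simp add: graph_add_dash graph_del_dash[OF dsh_sym dxy] add_dash_apply del_dash_apply dsh_at_new
          insert_commute)
  qed (use xy p1 in \<open>auto simp: verts_def sym_def insertion_edges_def corners\<close>)
qed

lemma melonic_inv_insIIs:
  assumes zx: "par G z = Some x" and b: "b \<in> {3, 4}"
    and pp: "\<pi> 2 = 1" "\<pi> 3 = b" "\<pi> 4 = 7 - b"
  shows "melonic_inv \<lparr>par = (par G)(v \<mapsto> x, v' \<mapsto> (v,2), z \<mapsto> (v',2)),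
              dsh = add_dash (add_dash (dsh G) (v,3) (v',b)) (v,4) (v',7-b),
              cor = set_prop (cor G) v v' p\<rparr>" (is "melonic_inv ?G'")
proof -
  have "((z, 1), x) \<in> gadj G" using zx gedges_subset_gadj unfolding gedges_def by blast
  then have xy: "(x, (z, 1)) \<in> gadj G" using sym_gadj by (blast dest: symD)
  have z: "z \<in> verts G" "z \<noteq> v" "z \<noteq> v'" using zx new unfolding verts_def by auto
  have b_facts: "b \<noteq> 2" "7 - b \<noteq> 2" "7 - b \<noteq> b" using b by auto
  have p1: "\<pi> 1 = 2" using b pp by (intro prop_perm_1[OF p]) auto
  have corners: "corners v v' p = {((v,1),(v',2)), ((v,2),(v',1)), ((v,3),(v',b)), ((v,4),(v',7-b))}"
    unfolding corners_def atLeastAtMost_1_4 using p1 pp by simp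
  let ?ND = "{((v,3),(v',b)), ((v',b),(v,3)), ((v,4),(v',7-b)), ((v',7-b),(v,4))}"
  show ?thesis
  proof (rule melonic_inv_insertion[where NP = "{(v, x), (v', (v,2)), (z, (v',2))}" and DP = "{(z, x)}"
        and ND = ?ND and DD = "{}"])
    show "Map.graph (par ?G') = {(v, x), (v', (v,2)), (z, (v',2))} \<union> (Map.graph (par G) - {(z, x)})"
      using par_at_new new(3) z zx
      by (simp add: graph_upd_None graph_upd_Some insert_commute del: graph_map_upd) blast
    show "Map.graph (dsh ?G') = ?ND \<union> (Map.graph (dsh G) - {})"
      using b_facts new(3) by (simp add: graph_add_dash add_dash_apply dsh_at_new)
  qed (use xy z p1 in \<open>auto simp: verts_def sym_def insertion_edges_def corners\<close>)
qed

lemma melonic_inv_insIIIs: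
  assumes zx: "par G z = Some x" and a: "a \<in> {3, 4}" and c: "c \<in> {3, 4}"
    and pp: "\<pi> a = 1" "\<pi> 2 = 7 - c" "\<pi> (7 - a) = 2"
  shows "melonic_inv \<lparr>par = (par G)(v \<mapsto> x, v' \<mapsto> (v,a), z \<mapsto> (v',c)),
              dsh = add_dash (add_dash (dsh G) (v,2) (v',7-c)) (v,7-a) (v',2),
              cor = set_prop (cor G) v v' p\<rparr>" (is "melonic_inv ?G'")
proof -
  have "((z, 1), x) \<in> gadj G" using zx gedges_subset_gadj unfolding gedges_def by blast
  then have xy: "(x, (z, 1)) \<in> gadj G" using sym_gadj by (blast dest: symD)
  have z: "z \<in> verts G" "z \<noteq> v" "z \<noteq> v'" using zx new unfolding verts_def by auto
  have ac_facts: "a \<noteq> 2" "7 - a \<noteq> 2" "7 - a \<noteq> a" "c \<noteq> 2" "7 - c \<noteq> 2" "7 - c \<noteq> c"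
    using a c by auto
  have p1: "\<pi> 1 = c" using a c pp by (intro prop_perm_1[OF p]) auto
  have "{1..4::nat} = {1, 2, a, 7 - a}" using a by auto
  then have corners: "corners v v' p = {((v,1),(v',c)), ((v,2),(v',7-c)), ((v,a),(v',1)), ((v,7-a),(v',2))}"
    unfolding corners_def using p1 pp by simp
  let ?ND = "{((v,2),(v',7-c)), ((v',7-c),(v,2)), ((v,7-a),(v',2)), ((v',2),(v,7-a))}"
  show ?thesis
  proof (rule melonic_inv_insertion[where NP = "{(v, x), (v', (v,a)), (z, (v',c))}" and DP = "{(z, x)}"
        and ND = ?ND and DD = "{}"])
    show "Map.graph (par ?G') = {(v, x), (v', (v,a)), (z, (v',c))} \<union> (Map.graph (par G) - {(z, x)})"
      using par_at_new new(3) z zx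
      by (simp add: graph_upd_None graph_upd_Some insert_commute del: graph_map_upd) blast
    show "Map.graph (dsh ?G') = ?ND \<union> (Map.graph (dsh G) - {})"
      using ac_facts new(3) by (simp add: graph_add_dash add_dash_apply dsh_at_new)
  qed (use xy z p1 in \<open>auto simp: verts_def sym_def insertion_edges_def corners\<close>)
qed

end

lemma melonic_inv_if_melonic: "melonic G \<Longrightarrow> melonic_inv G"
proof (induction rule: melonic.induct)
  case triv
  show ?case by (rule melonic_inv_trivial_graph)
next
  case (insI G x y v v' b p)
  then interpret fresh_vertices G v v' p by (intro fresh_vertices.intro) auto
  show ?case using insI by (intro melonic_inv_insI) auto
next
  case (insII G x y v v' b p)
  then interpret fresh_vertices G v v' p by (intro fresh_vertices.intro) auto
  show ?case using insII by (intro melonic_inv_insII) auto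
next
  case (insIII G x y v v' a c p)
  then interpret fresh_vertices G v v' p by (intro fresh_vertices.intro) auto
  show ?case using insIII by (intro melonic_inv_insIII) auto
next
  case (insIIs G z x v v' b p)
  then interpret fresh_vertices G v v' p by (intro fresh_vertices.intro) auto
  show ?case using insIIs by (intro melonic_inv_insIIs) auto
next
  case (insIIIs G z x v v' a c p)
  then interpret fresh_vertices G v v' p by (intro fresh_vertices.intro) auto
  show ?case using insIIIs by (intro melonic_inv_insIIIs) auto
qed

text \<open>The invariant holds for every melonic graph.\<close>

theorem lemma5:
  fixes n :: nat and G :: mgraph
  assumes "is_graph n G"
    and "melonic G"
  shows "degree G = 0"
  using degree_eq_0_if_melonic_inv[OF melonic_inv_if_melonic[OF assms(2)]] .

end
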